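(* Let $\gamma\ge1$, $p(\rho)=\rho^\gamma$, and consider the generalized Riemann problem for $\rho_t+(\rho u)_x=0$, $(\rho u)_t+(\rho u^2+p(\rho))_x=0$ with initial data $\varrho_0=\rho_1\mathcal L^1\lfloor\{x<0\}+\rho_0\delta_{\{x=0\}}+\rho_2\mathcal L^1\lfloor\{x>0\}$, $u(x,0)=u_1\mathsf I_{\{x<0\}}+u_0\mathsf I_{\{x=0\}}+u_2\mathsf I_{\{x>0\}}$, $\rho_1,\rho_2>0$, $\rho_0\ge0$. Consider the single delta shock solutions with front $x=x(t)$ given by the explicit formulas in the context, and suppose they satisfy the over-compressing entropy condition. Then: ($\alpha$) for $\rho_0=0$, each such solution is self-similar; ($\beta$) for $\rho_0>0$: (a) the delta shock front $x=x(t)$ is convex if in addition either (i) $[\rho]=0$ and $u_2\le u_0<\frac{u_1+u_2}{2}$, or (ii) $[\rho]\ne0$ and $u_2\le u_0<\min\{u_1,\frac{[\rho u]+\sqrt a}{[\rho]}\}$; (b) the front is concave if in addition either (i) $[\rho]=0$ and $u_1\ge u_0>\frac{u_1+u_2}{2}$, or (ii) $[\rho]\ne0$ and $u_1\ge u_0>\max\{u_2,\frac{[\rho u]+\sqrt a}{[\rho]}\}$.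
   Context: Notation: $[\rho]=\rho_2-\rho_1$, $[u]=u_2-u_1$, $[u^2]=u_2^2-u_1^2$, $[\rho u]=\rho_2u_2-\rho_1u_1$, $[p]=\rho_2^\gamma-\rho_1^\gamma$; $a=\rho_1\rho_2[u]^2-[\rho][p]$, $b=[\rho]u_0-[\rho u]$, $\Delta(t)=at^2+2\rho_0bt+\rho_0^2$. $\mathcal L^1$ Lebesgue measure, $m\lfloor A$ restriction, $\delta_{\{x=y\}}$ Dirac mass, $\mathsf I_A$ indicator. A single delta shock solution is a Radon measure solution (mass and momentum equations satisfied in the weak measure sense, with $d m/d\varrho=u$, $dn/d\varrho=u^2$ for the momentum and momentum-flux measures $m,n$, and pressure $\rho^\gamma$ on the absolutely continuous part) of the form $\varrho(t)=\rho_1\mathcal L^1\lfloor\{x<x(t)\}+\rho_2\mathcal L^1\lfloor\{x>x(t)\}+w_\rho(t)\delta_{\{x=x(t)\}}$, $u(t)=u_1\mathsf I_{\{x<x(t)\}}+u_2\mathsf I_{\{x>x(t)\}}+x'(t)\mathsf I_{\{x=x(t)\}}$, with $x(0)=0$ and $w_\rho\ge0$. The solutions considered are: for $\rho_0=0$, $[\rho]=0$, $[u]\le0$: $x(t)=\frac{(u_1+u_2)t}{2}$, $w_\rho=-\rho_1[u]t$; for $\rho_0=0$, $[\rho]\ne0$, $a\ge0$: $x(t)=\frac{([\rho u]+\sqrt a)t}{[\rho]}$, $w_\rho=\sqrt a\,t$; for $\rho_0>0$, $[\rho]=0$: $x(t)=\frac{\rho_1[u^2]t^2-2\rho_0u_0t}{2(\rho_1[u]t-\rho_0)}$,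 $w_\rho=-\rho_1[u]t+\rho_0$; for $\rho_0>0$, $[\rho]\ne0$: $x(t)=\frac{[\rho u]t-\rho_0+\sqrt{\Delta(t)}}{[\rho]}$, $w_\rho=\sqrt{\Delta(t)}$ (on the time interval where $\Delta\ge0$). Over-compressing entropy condition: $u_1\ge x'(t)\ge u_2$. *)

theory Defs
  imports "HOL-Analysis.Analysis"
begin

definition a_coef :: "real \<Rightarrow> real \<Rightarrow> real \<Rightarrow> real \<Rightarrow> real \<Rightarrow> real" where
  "a_coef \<gamma> \<rho>1 \<rho>2 u1 u2 =
     \<rho>1 * \<rho>2 * (u2 - u1)^2 - (\<rho>2 - \<rho>1) * (\<rho>2 powr \<gamma> - \<rho>1 powr \<gamma>)"

definition b_coef :: "real \<Rightarrow> real \<Rightarrow> real \<Rightarrow> real \<Rightarrow> real \<Rightarrow> real" where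
  "b_coef \<rho>1 \<rho>2 u0 u1 u2 = (\<rho>2 - \<rho>1) * u0 - (\<rho>2 * u2 - \<rho>1 * u1)"

definition Delta :: "real \<Rightarrow> real \<Rightarrow> real \<Rightarrow> real \<Rightarrow> real \<Rightarrow> real \<Rightarrow> real \<Rightarrow> real \<Rightarrow> real" where
  "Delta \<gamma> \<rho>0 \<rho>1 \<rho>2 u0 u1 u2 t =
     a_coef \<gamma> \<rho>1 \<rho>2 u1 u2 * t^2 + 2 * \<rho>0 * b_coef \<rho>1 \<rho>2 u0 u1 u2 * t + \<rho>0^2"

definition front :: "real \<Rightarrow> real \<Rightarrow> real \<Rightarrow> real \<Rightarrow> real \<Rightarrow> real \<Rightarrow> real \<Rightarrow> real \<Rightarrow> real" where
  "front \<gamma> \<rho>0 \<rho>1 \<rho>2 u0 u1 u2 t =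
    (if \<rho>0 = 0 then
       (if \<rho>2 = \<rho>1 then (u1 + u2) * t / 2
        else ((\<rho>2 * u2 - \<rho>1 * u1) + sqrt (a_coef \<gamma> \<rho>1 \<rho>2 u1 u2)) * t / (\<rho>2 - \<rho>1))
     else
       (if \<rho>2 = \<rho>1 then (\<rho>1 * (u2^2 - u1^2) * t^2 - 2 * \<rho>0 * u0 * t)
                            / (2 * (\<rho>1 * (u2 - u1) * t - \<rho>0))
        else ((\<rho>2 * u2 - \<rho>1 * u1) * t - \<rho>0 + sqrt (Delta \<gamma> \<rho>0 \<rho>1 \<rho>2 u0 u1 u2 t))
             / (\<rho>2 - \<rho>1)))"

definition weight :: "real \<Rightarrow> real \<Rightarrow> real \<Rightarrow> real \<Rightarrow> real \<Rightarrow> real \<Rightarrow> real \<Rightarrow> real \<Rightarrow> real" where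
  "weight \<gamma> \<rho>0 \<rho>1 \<rho>2 u0 u1 u2 t =
    (if \<rho>0 = 0 then
       (if \<rho>2 = \<rho>1 then - \<rho>1 * (u2 - u1) * t else sqrt (a_coef \<gamma> \<rho>1 \<rho>2 u1 u2) * t)
     else
       (if \<rho>2 = \<rho>1 then - \<rho>1 * (u2 - u1) * t + \<rho>0
        else sqrt (Delta \<gamma> \<rho>0 \<rho>1 \<rho>2 u0 u1 u2 t)))"

definition admissible :: "real \<Rightarrow> real \<Rightarrow> real \<Rightarrow> real \<Rightarrow> real \<Rightarrow> real \<Rightarrow> bool" where
  "admissible \<gamma> \<rho>0 \<rho>1 \<rho>2 u1 u2 \<longleftrightarrow>
     (\<rho>0 = 0 \<and> \<rho>2 = \<rho>1 \<longrightarrow> u2 - u1 \<le> 0) \<and>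
     (\<rho>0 = 0 \<and> \<rho>2 \<noteq> \<rho>1 \<longrightarrow> a_coef \<gamma> \<rho>1 \<rho>2 u1 u2 \<ge> 0)"

text \<open>Time interval [0, T) or [0, T] (starting at t = 0) on which the explicit solution
  is defined: all t \<ge> 0 for rho0 = 0; the times before the weight (equivalently
  the denominator) vanishes for rho0 > 0, [rho] = 0; the times on which Delta \<ge> 0
  (from t = 0 on) for rho0 > 0, [rho] \<noteq> 0.\<close>
definition time_dom :: "real \<Rightarrow> real \<Rightarrow> real \<Rightarrow> real \<Rightarrow> real \<Rightarrow> real \<Rightarrow> real \<Rightarrow> real set" where
  "time_dom \<gamma> \<rho>0 \<rho>1 \<rho>2 u0 u1 u2 =
    (if \<rho>0 = 0 then {0..}
     else if \<rho>2 = \<rho>1 then {t. 0 \<le> t \<and> (\<forall>s\<in>{0..t}. \<rho>0 - \<rho>1 * (u2 - u1) * s > 0)}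
     else {t. 0 \<le> t \<and> (\<forall>s\<in>{0..t}. Delta \<gamma> \<rho>0 \<rho>1 \<rho>2 u0 u1 u2 s \<ge> 0)})"

definition over_compressing :: "(real \<Rightarrow> real) \<Rightarrow> real \<Rightarrow> real \<Rightarrow> real set \<Rightarrow> bool" where
  "over_compressing x u1 u2 D \<longleftrightarrow>
     (\<forall>t\<in>D. t > 0 \<longrightarrow> (\<forall>d. (x has_real_derivative d) (at t) \<longrightarrow> u2 \<le> d \<and> d \<le> u1))"

text \<open>Self-similarity of a single delta shock solution (front x, weight w): invariance of
  the solution under the scaling (x,t) \<mapsto> (\<lambda>x, \<lambda>t); the constant states are
  scale invariant, so this amounts to x(\<lambda>t) = \<lambda>x(t) and w(\<lambda>t) = \<lambda>w(t).\<close>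
definition self_similar :: "(real \<Rightarrow> real) \<Rightarrow> (real \<Rightarrow> real) \<Rightarrow> bool" where
  "self_similar x w \<longleftrightarrow>
     (\<forall>c>0. \<forall>t\<ge>0. x (c * t) = c * x t \<and> w (c * t) = c * w t)"

end

theory Submission
  imports Defs
begin

(* For rho0 = 0 the front and the weight are linear in t.  For rho0 > 0 and [rho] = 0 the
   front is, for t >= 0, an affine function plus c / (rho0 - rho1 [u] t), where c has the sign
   of (u1 + u2)/2 - u0.  For [rho] <> 0 it is an affine function plus sqrt (Delta t) / [rho].
   With Delta t = a t^2 + 2 rho0 b t + rho0^2 and B its polar form,
   Delta x * Delta y - B(x,y)^2 = rho0^2 (a - b^2) (x - y)^2, so sqrt Delta is convex when
   b^2 <= a and concave on t >= 0 when b^2 >= a and b >= 0.  The hypothesis on u0 says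
   b < sqrt a if [rho] > 0 and b > sqrt a if [rho] < 0, which gives a convex front in both
   cases.  The concave case is the convex case of the problem reflected by x -> -x. *)

lemma convex_on_cong:
  "S = T \<Longrightarrow> (\<And>x. x \<in> T \<Longrightarrow> f x = g x) \<Longrightarrow> convex_on S f \<longleftrightarrow> convex_on T g"
  by (auto simp: convex_on_def convex_def)

lemma convex_on_affine_add:
  fixes g :: "real \<Rightarrow> real"
  assumes "convex_on S g"
  shows "convex_on S (\<lambda>t. m * t + c + g t)"
proof -
  have "convex_on S (\<lambda>t. m * t + c)"
    using convex_on_imp_convex[OF assms] by (intro convex_onI) (simp_all add: algebra_simps)
  then show ?thesis
    using assms by (rule convex_on_add)
qed

lemma convex_on_inverse_affine:
  fixes k r :: real
  assumes "convex S" "\<And>t. t \<in> S \<Longrightarrow> 0 < r - k * t"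
  shows "convex_on S (\<lambda>t. inverse (r - k * t))"
proof (rule convex_onI[OF _ assms(1)])
  fix \<theta> x y :: real
  assume "0 < \<theta>" "\<theta> < 1" "x \<in> S" "y \<in> S"
  moreover have "convex_on {0<..} (inverse :: real \<Rightarrow> real)"
    by (rule convex_on_inverse) auto
  ultimately have "inverse ((1 - \<theta>) * (r - k * x) + \<theta> * (r - k * y))
      \<le> (1 - \<theta>) * inverse (r - k * x) + \<theta> * inverse (r - k * y)"
    using convex_onD[of "{0<..}" inverse \<theta> "r - k * x" "r - k * y"] assms(2) by simp
  moreover have "(1 - \<theta>) * (r - k * x) + \<theta> * (r - k * y) = r - k * ((1 - \<theta>) * x + \<theta> * y)"
    by (simp add: algebra_simps)
  ultimately show "inverse (r - k * ((1 - \<theta>) *\<^sub>R x + \<theta> *\<^sub>R y))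
      \<le> (1 - \<theta>) * inverse (r - k * x) + \<theta> * inverse (r - k * y)"
    by simp
qed

lemma quadratic_convex_combination:
  fixes a b c x y \<theta> :: real
  shows "a * ((1 - \<theta>) * x + \<theta> * y)^2 + 2 * b * ((1 - \<theta>) * x + \<theta> * y) + c
    = (1 - \<theta>)^2 * (a * x^2 + 2 * b * x + c) + \<theta>^2 * (a * y^2 + 2 * b * y + c)
      + 2 * (1 - \<theta>) * \<theta> * (a * x * y + b * (x + y) + c)"
  by (simp add: power2_eq_square algebra_simps)

lemma quadratic_Gram_identity:
  fixes a b c x y :: real
  shows "(a * x^2 + 2 * b * x + c) * (a * y^2 + 2 * b * y + c) - (a * x * y + b * (x + y) + c)^2
    = (a * c - b^2) * (x - y)^2"
  by (simp add: power2_eq_square algebra_simps)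

lemma quadratic_nonneg:
  fixes a b c t :: real
  assumes "0 \<le> a" "0 \<le> c" "b^2 \<le> a * c"
  shows "0 \<le> a * t^2 + 2 * b * t + c"
proof (cases "a = 0")
  case True
  then show ?thesis using assms(2,3) by simp
next
  case False
  have "a * (a * t^2 + 2 * b * t + c) = (a * t + b)^2 + (a * c - b^2)"
    by (simp add: power2_eq_square algebra_simps)
  also have "\<dots> \<ge> 0" using assms(3) by simp
  finally show ?thesis using assms(1) False by (simp add: zero_le_mult_iff)
qed

lemma sqrt_quadratic_convex_on:
  fixes a b c :: real
  assumes "0 \<le> a" "0 \<le> c" "b^2 \<le> a * c" "convex S"
  shows "convex_on S (\<lambda>t. sqrt (a * t^2 + 2 * b * t + c))"
proof (rule convex_onI[OF _ assms(4)])
  fix \<theta> x y :: real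
  assume \<theta>: "0 < \<theta>" "\<theta> < 1"
  define p q B where "p = a * x^2 + 2 * b * x + c" and "q = a * y^2 + 2 * b * y + c"
    and "B = a * x * y + b * (x + y) + c"
  have pq: "0 \<le> p" "0 \<le> q"
    unfolding p_def q_def using quadratic_nonneg[OF assms(1-3)] by auto
  have "p * q - B^2 = (a * c - b^2) * (x - y)^2"
    unfolding p_def q_def B_def by (rule quadratic_Gram_identity)
  moreover have "0 \<le> (a * c - b^2) * (x - y)^2"
    using assms(3) by simp
  ultimately have "B^2 \<le> p * q"
    by linarith
  then have "B \<le> sqrt p * sqrt q"
    unfolding real_sqrt_mult[symmetric] by (rule real_le_rsqrt)
  have "a * ((1 - \<theta>) * x + \<theta> * y)^2 + 2 * b * ((1 - \<theta>) * x + \<theta> * y) + c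
      = (1 - \<theta>)^2 * p + \<theta>^2 * q + 2 * (1 - \<theta>) * \<theta> * B"
    unfolding p_def q_def B_def by (rule quadratic_convex_combination)
  also have "\<dots> \<le> (1 - \<theta>)^2 * p + \<theta>^2 * q + 2 * (1 - \<theta>) * \<theta> * (sqrt p * sqrt q)"
    using \<open>B \<le> sqrt p * sqrt q\<close> \<theta> by simp
  also have "\<dots> = ((1 - \<theta>) * sqrt p + \<theta> * sqrt q)^2"
    using pq by (simp add: power2_eq_square algebra_simps)
  finally have "sqrt (a * ((1 - \<theta>) * x + \<theta> * y)^2 + 2 * b * ((1 - \<theta>) * x + \<theta> * y) + c)
      \<le> (1 - \<theta>) * sqrt p + \<theta> * sqrt q"
    using \<theta> pq by (intro real_le_lsqrt) simp_all
  then show "sqrt (a * ((1 - \<theta>) *\<^sub>R x + \<theta> *\<^sub>R y)^2 + 2 * b * ((1 - \<theta>) *\<^sub>R x + \<theta> *\<^sub>R y) + c)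
      \<le> (1 - \<theta>) * sqrt (a * x^2 + 2 * b * x + c) + \<theta> * sqrt (a * y^2 + 2 * b * y + c)"
    by (simp add: p_def q_def)
qed

lemma sqrt_quadratic_concave_on:
  fixes a b c :: real
  assumes "0 \<le> a" "0 \<le> b" "0 \<le> c" "a * c \<le> b^2"
  shows "concave_on {0..} (\<lambda>t. sqrt (a * t^2 + 2 * b * t + c))"
proof (rule concave_on_linorderI[OF _ convex_real_interval(1)])
  fix \<theta> x y :: real
  assume \<theta>: "0 < \<theta>" "\<theta> < 1" and xy: "x \<in> {0..}" "y \<in> {0..}"
  define p q B where "p = a * x^2 + 2 * b * x + c" and "q = a * y^2 + 2 * b * y + c"
    and "B = a * x * y + b * (x + y) + c"
  have pqB: "0 \<le> p" "0 \<le> q" "0 \<le> B"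
    unfolding p_def q_def B_def using assms xy by simp_all
  have "p * q - B^2 = (a * c - b^2) * (x - y)^2"
    unfolding p_def q_def B_def by (rule quadratic_Gram_identity)
  moreover have "(a * c - b^2) * (x - y)^2 \<le> 0"
    using assms(4) by (simp add: mult_nonpos_nonneg)
  ultimately have "p * q \<le> B^2"
    by linarith
  then have "sqrt p * sqrt q \<le> B"
    unfolding real_sqrt_mult[symmetric] by (rule real_le_lsqrt[OF pqB(3)])
  have "((1 - \<theta>) * sqrt p + \<theta> * sqrt q)^2
      = (1 - \<theta>)^2 * p + \<theta>^2 * q + 2 * (1 - \<theta>) * \<theta> * (sqrt p * sqrt q)"
    using pqB by (simp add: power2_eq_square algebra_simps)
  also have "\<dots> \<le> (1 - \<theta>)^2 * p + \<theta>^2 * q + 2 * (1 - \<theta>) * \<theta> * B"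
    using \<open>sqrt p * sqrt q \<le> B\<close> \<theta> by simp
  also have "\<dots> = a * ((1 - \<theta>) * x + \<theta> * y)^2 + 2 * b * ((1 - \<theta>) * x + \<theta> * y) + c"
    unfolding p_def q_def B_def by (rule quadratic_convex_combination[symmetric])
  finally have "(1 - \<theta>) * sqrt p + \<theta> * sqrt q
      \<le> sqrt (a * ((1 - \<theta>) * x + \<theta> * y)^2 + 2 * b * ((1 - \<theta>) * x + \<theta> * y) + c)"
    by (rule real_le_rsqrt)
  then show "(1 - \<theta>) * sqrt (a * x^2 + 2 * b * x + c) + \<theta> * sqrt (a * y^2 + 2 * b * y + c)
      \<le> sqrt (a * ((1 - \<theta>) *\<^sub>R x + \<theta> *\<^sub>R y)^2 + 2 * b * ((1 - \<theta>) *\<^sub>R x + \<theta> *\<^sub>R y) + c)"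
    by (simp add: p_def q_def)
qed

lemma divide_diff_swap: "x / (a - b) = - x / (b - a)" for x a b :: "'a::field"
  by (metis divide_minus_right minus_diff_eq minus_divide_left)

lemma a_coef_reflect: "a_coef \<gamma> \<rho>2 \<rho>1 (-u2) (-u1) = a_coef \<gamma> \<rho>1 \<rho>2 u1 u2"
  unfolding a_coef_def by (simp add: power2_eq_square algebra_simps)

lemma b_coef_reflect: "b_coef \<rho>2 \<rho>1 (-u0) (-u2) (-u1) = b_coef \<rho>1 \<rho>2 u0 u1 u2"
  unfolding b_coef_def by (simp add: algebra_simps)

lemma Delta_reflect:
  "Delta \<gamma> \<rho>0 \<rho>2 \<rho>1 (-u0) (-u2) (-u1) = Delta \<gamma> \<rho>0 \<rho>1 \<rho>2 u0 u1 u2"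
  unfolding Delta_def a_coef_reflect b_coef_reflect ..

lemma front_reflect:
  "front \<gamma> \<rho>0 \<rho>2 \<rho>1 (-u0) (-u2) (-u1) = (\<lambda>t. - front \<gamma> \<rho>0 \<rho>1 \<rho>2 u0 u1 u2 t)"
proof
  fix t
  show "front \<gamma> \<rho>0 \<rho>2 \<rho>1 (-u0) (-u2) (-u1) t = - front \<gamma> \<rho>0 \<rho>1 \<rho>2 u0 u1 u2 t"
    unfolding front_def a_coef_reflect Delta_reflect divide_diff_swap[of _ \<rho>1]
    by (simp add: power2_eq_square algebra_simps minus_divide_left)
qed

lemma time_dom_reflect:
  "time_dom \<gamma> \<rho>0 \<rho>2 \<rho>1 (-u0) (-u2) (-u1) = time_dom \<gamma> \<rho>0 \<rho>1 \<rho>2 u0 u1 u2"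
  unfolding time_dom_def Delta_reflect by (auto simp: algebra_simps)

lemma self_similar_front_weight_without_delta:
  "self_similar (front \<gamma> 0 \<rho>1 \<rho>2 u0 u1 u2) (weight \<gamma> 0 \<rho>1 \<rho>2 u0 u1 u2)"
  unfolding self_similar_def front_def weight_def by (simp add: field_simps)

lemma front_convex_on_equal_densities:
  assumes "0 < \<rho>0" "0 < \<rho>1" "\<rho>2 = \<rho>1" "u2 < u1" "u0 \<le> (u1 + u2) / 2"
  shows "convex_on (time_dom \<gamma> \<rho>0 \<rho>1 \<rho>2 u0 u1 u2) (front \<gamma> \<rho>0 \<rho>1 \<rho>2 u0 u1 u2)"
proof -
  define k m where "k = \<rho>1 * (u2 - u1)" and "m = (u1 + u2) / 2"
  \<comment> \<open>division of the numerator of the front by its denominator\<close>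
  define g where "g t = m * t + \<rho>0 * (m - u0) / k + \<rho>0^2 * (m - u0) / (- k) * inverse (\<rho>0 - k * t)"
    for t
  have "k < 0"
    unfolding k_def using assms(2,4) by (simp add: mult_pos_neg)
  then have denom_pos: "0 < \<rho>0 - k * t" if "0 \<le> t" for t
    using assms(1) that mult_nonpos_nonneg[of k t] by linarith
  have dom: "time_dom \<gamma> \<rho>0 \<rho>1 \<rho>2 u0 u1 u2 = {0..}"
    unfolding time_dom_def using assms(1,3) denom_pos by (auto simp: k_def)
  have front: "front \<gamma> \<rho>0 \<rho>1 \<rho>2 u0 u1 u2 t = g t" if "0 \<le> t" for t
  proof -
    have "\<rho>1 * (u2^2 - u1^2) = 2 * k * m"
      unfolding k_def m_def by (simp add: power2_eq_square algebra_simps)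
    then have "front \<gamma> \<rho>0 \<rho>1 \<rho>2 u0 u1 u2 t
        = (2 * k * m * t^2 - 2 * \<rho>0 * u0 * t) / (2 * (k * t - \<rho>0))"
      unfolding front_def using assms(1,3) by (simp flip: k_def)
    also have "\<dots> = g t"
      unfolding g_def using \<open>k < 0\<close> denom_pos[OF that] by (simp add: field_simps power2_eq_square)
    finally show ?thesis .
  qed
  have "0 \<le> \<rho>0^2 * (m - u0) / (- k)"
    using \<open>k < 0\<close> assms(5) unfolding m_def by (intro divide_nonneg_pos) auto
  then have "convex_on {0..} g"
    unfolding g_def using denom_pos
    by (intro convex_on_affine_add convex_on_cmul convex_on_inverse_affine) auto
  moreover have "convex_on (time_dom \<gamma> \<rho>0 \<rho>1 \<rho>2 u0 u1 u2) (front \<gamma> \<rho>0 \<rho>1 \<rho>2 u0 u1 u2)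
      \<longleftrightarrow> convex_on {0..} g"
    using front by (intro convex_on_cong[OF dom]) simp
  ultimately show ?thesis
    by simp
qed

lemma b_coef_bounds:
  assumes "0 < \<rho>1" "\<rho>2 \<noteq> \<rho>1" "0 \<le> a_coef \<gamma> \<rho>1 \<rho>2 u1 u2" "u2 \<le> u0" "u0 < u1"
    and "u0 < (\<rho>2 * u2 - \<rho>1 * u1 + sqrt (a_coef \<gamma> \<rho>1 \<rho>2 u1 u2)) / (\<rho>2 - \<rho>1)"
  shows "0 \<le> b_coef \<rho>1 \<rho>2 u0 u1 u2"
    and "\<rho>1 < \<rho>2 \<Longrightarrow> (b_coef \<rho>1 \<rho>2 u0 u1 u2)^2 \<le> a_coef \<gamma> \<rho>1 \<rho>2 u1 u2"
    and "\<rho>2 < \<rho>1 \<Longrightarrow> a_coef \<gamma> \<rho>1 \<rho>2 u1 u2 \<le> (b_coef \<rho>1 \<rho>2 u0 u1 u2)^2"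
proof -
  define A b r P where "A = a_coef \<gamma> \<rho>1 \<rho>2 u1 u2" and "b = b_coef \<rho>1 \<rho>2 u0 u1 u2"
    and "r = \<rho>2 - \<rho>1" and "P = \<rho>2 * u2 - \<rho>1 * u1"
  have b: "b = r * u0 - P"
    unfolding b_def b_coef_def r_def P_def by simp
  have u0: "u0 < (P + sqrt A) / r"
    using assms(6) by (simp add: A_def P_def r_def)
  have "0 \<le> sqrt A"
    using assms(3) by (simp add: A_def)
  have b_below: "b < sqrt A" if "0 < r"
    using u0 that unfolding b by (simp add: pos_less_divide_eq algebra_simps)
  have b_above: "sqrt A < b" if "r < 0"
    using u0 that unfolding b by (simp add: neg_less_divide_eq algebra_simps)
  show "0 \<le> b_coef \<rho>1 \<rho>2 u0 u1 u2"
  proof (cases "0 < r")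
    case True
    have "b = r * (u0 - u2) + \<rho>1 * (u1 - u2)"
      unfolding b P_def r_def by (simp add: algebra_simps)
    moreover have "0 \<le> r * (u0 - u2)" "0 < \<rho>1 * (u1 - u2)"
      using True assms(1,4,5) by simp_all
    ultimately show ?thesis
      unfolding b_def by linarith
  next
    case False
    then have "r < 0"
      using assms(2) by (simp add: r_def)
    then show ?thesis
      using b_above \<open>0 \<le> sqrt A\<close> unfolding b_def by linarith
  qed
  then show "b_coef \<rho>1 \<rho>2 u0 u1 u2 ^ 2 \<le> a_coef \<gamma> \<rho>1 \<rho>2 u1 u2" if "\<rho>1 < \<rho>2"
    using power_mono[OF less_imp_le[OF b_below], of 2] that assms(3)
    by (simp add: A_def b_def r_def)
  show "a_coef \<gamma> \<rho>1 \<rho>2 u1 u2 \<le> b_coef \<rho>1 \<rho>2 u0 u1 u2 ^ 2" if "\<rho>2 < \<rho>1"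
    using power_mono[OF less_imp_le[OF b_above] \<open>0 \<le> sqrt A\<close>, of 2] that assms(3)
    by (simp add: A_def b_def r_def)
qed

lemma front_convex_on_density_jump:
  assumes "0 < \<rho>0" "0 < \<rho>1" "\<rho>2 \<noteq> \<rho>1" "0 \<le> a_coef \<gamma> \<rho>1 \<rho>2 u1 u2"
    and "u2 \<le> u0" "u0 < u1"
    and "u0 < (\<rho>2 * u2 - \<rho>1 * u1 + sqrt (a_coef \<gamma> \<rho>1 \<rho>2 u1 u2)) / (\<rho>2 - \<rho>1)"
  shows "convex_on (time_dom \<gamma> \<rho>0 \<rho>1 \<rho>2 u0 u1 u2) (front \<gamma> \<rho>0 \<rho>1 \<rho>2 u0 u1 u2)"
proof -
  define A b r P where "A = a_coef \<gamma> \<rho>1 \<rho>2 u1 u2" and "b = b_coef \<rho>1 \<rho>2 u0 u1 u2"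
    and "r = \<rho>2 - \<rho>1" and "P = \<rho>2 * u2 - \<rho>1 * u1"
  define Q where "Q t = A * t^2 + 2 * (\<rho>0 * b) * t + \<rho>0^2" for t
  note b_bounds = b_coef_bounds[OF assms(2-7), folded A_def b_def]
  have "0 \<le> A"
    using assms(4) by (simp add: A_def)
  have Delta: "Delta \<gamma> \<rho>0 \<rho>1 \<rho>2 u0 u1 u2 t = Q t" for t
    unfolding Delta_def Q_def A_def b_def by simp
  have front: "front \<gamma> \<rho>0 \<rho>1 \<rho>2 u0 u1 u2 t = P / r * t + - \<rho>0 / r + sqrt (Q t) / r" for t
    unfolding front_def Delta P_def[symmetric] r_def[symmetric] using assms(1,3)
    by (simp add: diff_divide_distrib add_divide_distrib)
  have dom: "time_dom \<gamma> \<rho>0 \<rho>1 \<rho>2 u0 u1 u2 = {0..}"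
    unfolding time_dom_def Delta Q_def using assms(1,3) \<open>0 \<le> A\<close> b_bounds(1) by auto
  have "convex_on {0..} (\<lambda>t. sqrt (Q t) / r)"
  proof (cases "\<rho>1 < \<rho>2")
    case True
    have "b^2 * \<rho>0^2 \<le> A * \<rho>0^2"
      using b_bounds(2)[OF True] by (rule mult_right_mono) simp
    then have "(\<rho>0 * b)^2 \<le> A * \<rho>0^2"
      by (simp add: power_mult_distrib mult.commute)
    then show ?thesis
      unfolding Q_def using True \<open>0 \<le> A\<close>
      by (intro convex_on_cdiv sqrt_quadratic_convex_on convex_real_interval) (simp_all add: r_def)
  next
    case False
    then have "\<rho>2 < \<rho>1"
      using assms(3) by simp
    have "A * \<rho>0^2 \<le> b^2 * \<rho>0^2"
      using b_bounds(3)[OF \<open>\<rho>2 < \<rho>1\<close>] by (rule mult_right_mono) simp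
    then have "A * \<rho>0^2 \<le> (\<rho>0 * b)^2"
      by (simp add: power_mult_distrib mult.commute)
    then have "concave_on {0..} (\<lambda>t. sqrt (Q t))"
      unfolding Q_def using \<open>0 \<le> A\<close> b_bounds(1) assms(1)
      by (intro sqrt_quadratic_concave_on) simp_all
    then have "convex_on {0..} (\<lambda>t. - sqrt (Q t) / - r)"
      using \<open>\<rho>2 < \<rho>1\<close> unfolding concave_on_def r_def by (intro convex_on_cdiv) simp_all
    then show ?thesis
      by simp
  qed
  then show ?thesis
    unfolding dom front by (rule convex_on_affine_add)
qed

lemma front_convex_on:
  assumes "0 < \<rho>0" "0 < \<rho>1"
    and "(\<rho>2 = \<rho>1 \<and> u2 \<le> u0 \<and> u0 < (u1 + u2) / 2)
      \<or> (\<rho>2 \<noteq> \<rho>1 \<and> a_coef \<gamma> \<rho>1 \<rho>2 u1 u2 \<ge> 0 \<and> u2 \<le> u0 \<and>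
         u0 < min u1 (((\<rho>2 * u2 - \<rho>1 * u1) + sqrt (a_coef \<gamma> \<rho>1 \<rho>2 u1 u2)) / (\<rho>2 - \<rho>1)))"
  shows "convex_on (time_dom \<gamma> \<rho>0 \<rho>1 \<rho>2 u0 u1 u2) (front \<gamma> \<rho>0 \<rho>1 \<rho>2 u0 u1 u2)"
  using assms(3)
proof (elim disjE conjE)
  assume "\<rho>2 = \<rho>1" "u2 \<le> u0" "u0 < (u1 + u2) / 2"
  then show ?thesis
    by (intro front_convex_on_equal_densities[OF assms(1,2)]) simp_all
next
  assume "\<rho>2 \<noteq> \<rho>1" "a_coef \<gamma> \<rho>1 \<rho>2 u1 u2 \<ge> 0" "u2 \<le> u0"
    "u0 < min u1 (((\<rho>2 * u2 - \<rho>1 * u1) + sqrt (a_coef \<gamma> \<rho>1 \<rho>2 u1 u2)) / (\<rho>2 - \<rho>1))"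
  then show ?thesis
    by (intro front_convex_on_density_jump[OF assms(1,2)]) simp_all
qed

lemma front_concave_on:
  assumes "0 < \<rho>0" "0 < \<rho>2"
    and "(\<rho>2 = \<rho>1 \<and> u1 \<ge> u0 \<and> u0 > (u1 + u2) / 2)
      \<or> (\<rho>2 \<noteq> \<rho>1 \<and> a_coef \<gamma> \<rho>1 \<rho>2 u1 u2 \<ge> 0 \<and> u1 \<ge> u0 \<and>
         u0 > max u2 (((\<rho>2 * u2 - \<rho>1 * u1) + sqrt (a_coef \<gamma> \<rho>1 \<rho>2 u1 u2)) / (\<rho>2 - \<rho>1)))"
  shows "concave_on (time_dom \<gamma> \<rho>0 \<rho>1 \<rho>2 u0 u1 u2) (front \<gamma> \<rho>0 \<rho>1 \<rho>2 u0 u1 u2)"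
proof -
  \<comment> \<open>X is kept opaque so that the simplifier cannot push the sign of its reflection inside\<close>
  define X where "X = (\<rho>2 * u2 - \<rho>1 * u1 + sqrt (a_coef \<gamma> \<rho>1 \<rho>2 u1 u2)) / (\<rho>2 - \<rho>1)"
  have X_reflect: "(\<rho>1 * - u1 - \<rho>2 * - u2 + sqrt (a_coef \<gamma> \<rho>2 \<rho>1 (- u2) (- u1))) / (\<rho>1 - \<rho>2) = - X"
    unfolding X_def a_coef_reflect divide_diff_swap[of _ \<rho>1] minus_divide_left by simp
  have "convex_on (time_dom \<gamma> \<rho>0 \<rho>2 \<rho>1 (-u0) (-u2) (-u1)) (front \<gamma> \<rho>0 \<rho>2 \<rho>1 (-u0) (-u2) (-u1))"
    by (rule front_convex_on[OF assms(1,2)], unfold X_reflect)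
      (use assms(3)[folded X_def] in \<open>auto simp: a_coef_reflect\<close>)
  then show ?thesis
    unfolding concave_on_def front_reflect time_dom_reflect .
qed

theorem proposition3:
  fixes \<gamma> \<rho>0 \<rho>1 \<rho>2 u0 u1 u2 :: real
  assumes "\<gamma> \<ge> 1" and "\<rho>1 > 0" and "\<rho>2 > 0" and "\<rho>0 \<ge> 0"
    and "admissible \<gamma> \<rho>0 \<rho>1 \<rho>2 u1 u2"
    and "over_compressing (front \<gamma> \<rho>0 \<rho>1 \<rho>2 u0 u1 u2) u1 u2 (time_dom \<gamma> \<rho>0 \<rho>1 \<rho>2 u0 u1 u2)"
  shows "(\<rho>0 = 0 \<longrightarrow> self_similar (front \<gamma> \<rho>0 \<rho>1 \<rho>2 u0 u1 u2) (weight \<gamma> \<rho>0 \<rho>1 \<rho>2 u0 u1 u2))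
       \<and> (\<rho>0 > 0 \<longrightarrow>
           (((\<rho>2 = \<rho>1 \<and> u2 \<le> u0 \<and> u0 < (u1 + u2) / 2)
             \<or> (\<rho>2 \<noteq> \<rho>1 \<and> a_coef \<gamma> \<rho>1 \<rho>2 u1 u2 \<ge> 0 \<and> u2 \<le> u0 \<and>
                u0 < min u1 (((\<rho>2 * u2 - \<rho>1 * u1) + sqrt (a_coef \<gamma> \<rho>1 \<rho>2 u1 u2)) / (\<rho>2 - \<rho>1))))
            \<longrightarrow> convex_on (time_dom \<gamma> \<rho>0 \<rho>1 \<rho>2 u0 u1 u2) (front \<gamma> \<rho>0 \<rho>1 \<rho>2 u0 u1 u2))
         \<and> (((\<rho>2 = \<rho>1 \<and> u1 \<ge> u0 \<and> u0 > (u1 + u2) / 2)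
             \<or> (\<rho>2 \<noteq> \<rho>1 \<and> a_coef \<gamma> \<rho>1 \<rho>2 u1 u2 \<ge> 0 \<and> u1 \<ge> u0 \<and>
                u0 > max u2 (((\<rho>2 * u2 - \<rho>1 * u1) + sqrt (a_coef \<gamma> \<rho>1 \<rho>2 u1 u2)) / (\<rho>2 - \<rho>1))))
            \<longrightarrow> concave_on (time_dom \<gamma> \<rho>0 \<rho>1 \<rho>2 u0 u1 u2) (front \<gamma> \<rho>0 \<rho>1 \<rho>2 u0 u1 u2)))"
proof (intro conjI impI)
  assume "\<rho>0 = 0"
  then show "self_similar (front \<gamma> \<rho>0 \<rho>1 \<rho>2 u0 u1 u2) (weight \<gamma> \<rho>0 \<rho>1 \<rho>2 u0 u1 u2)"
    using self_similar_front_weight_without_delta by simp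
qed (use front_convex_on[OF _ assms(2)] front_concave_on[OF _ assms(3)] in simp_all)

end
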